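(* Let $G$ be a graph and $t$ a positive integer. Then $\operatorname{th}_{\operatorname{H}}(G)\leq t$ if and only if there exist integers $a\geq 1$ and $b\geq 0$ with $a+b=t$ such that $G$ is isomorphic to a graph obtained from $K_a\,\square\,\overline{K_{b+1}}$ by a sequence of operations, each of which is either identifying an empty pair or deleting a complete edge.
   Context: All graphs are finite, simple and undirected. $K_a\,\square\,\overline{K_{b+1}}$ has vertex set $\{(i,j):1\leq i\leq a,\ 1\leq j\leq b+1\}$, with $(i,j)$ adjacent to $(i',j')$ iff $j=j'$ and $i\neq i'$ (each column $j$ induces a $K_a$, each row $i$ is an independent set); these edges are the complete edges. An empty pair is a pair of vertices $\{(i,j),(i,j+1)\}$ lying in the same row and in adjacent columns (tracked through the operations). Identifying an empty pair replaces its two vertices by a single vertex whose neighborhood is the union of their neighborhoods (discarding loops and multiple edges); deleting a complete edge removes one complete edge. Hopping color change rule: a blue vertex $v$ may force a white vertex $w$ to become blue if $v$ has not previously performed a force and every neighbor of $v$ is blue. For an initial blue set $B$, a chronological list of forces of $B$ is a sequence of such forces applied one at a time until no further force is possible; its underlying unordered set is a set of forces of $B$. $B$ is a hopping forcing set if some chronological list of forces of $B$ turns all vertices blue. For a set of forces $\mathcal F$ of $B$, let $\mathcal F^{(0)}=B$ and for $t\geq1$ let $\mathcal F^{(t)}$ be the set of vertices $w\notin U_{t-1}:=\bigcup_{i=0}^{t-1}\mathcal F^{(i)}$ for which there is $(v\to w)\in\mathcal F$ with $v\in U_{t-1}$ and all neighbors of $v$ in $U_{t-1}$. $\operatorname{pt}_{\operatorname{H}}(G;\mathcal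 F)$ is the least $t$ with $\bigcup_{i=0}^t\mathcal F^{(i)}=V(G)$ ($\infty$ if none); $\operatorname{pt}_{\operatorname{H}}(G;B)$ is the minimum over sets of forces $\mathcal F$ of $B$ ($\infty$ if $B$ is not a hopping forcing set). $\operatorname{th}_{\operatorname{H}}(G)=\min_{B\subseteq V(G)}\big(|B|+\operatorname{pt}_{\operatorname{H}}(G;B)\big)$. *)

theory Defs
  imports Main "HOL-Library.Extended_Nat"
begin

text \<open>A graph is given by a vertex set V and a set E of ordered pairs
(each undirected edge is stored in both orientations).\<close>

definition simple_graph :: "'a set \<Rightarrow> ('a \<times> 'a) set \<Rightarrow> bool" where
  "simple_graph V E \<longleftrightarrow> finite V \<and> E \<subseteq> V \<times> V \<and> sym E \<and> (\<forall>v. (v, v) \<notin> E)"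

definition nbrs :: "('a \<times> 'a) set \<Rightarrow> 'a \<Rightarrow> 'a set" where
  "nbrs E v = {u. (v, u) \<in> E}"

definition graph_iso :: "'a set \<Rightarrow> ('a \<times> 'a) set \<Rightarrow> 'b set \<Rightarrow> ('b \<times> 'b) set \<Rightarrow> bool" where
  "graph_iso V E W F \<longleftrightarrow> (\<exists>f. bij_betw f V W \<and>
      (\<forall>u\<in>V. \<forall>v\<in>V. (u, v) \<in> E \<longleftrightarrow> (f u, f v) \<in> F))"

definition blue_after :: "'a set \<Rightarrow> ('a \<times> 'a) list \<Rightarrow> nat \<Rightarrow> 'a set" where
  "blue_after B fs k = B \<union> snd ` set (take k fs)"

text \<open>v may force w when the current blue set is U and the vertices that have already
forced are those in P.\<close>
definition hop_force_ok :: "'a set \<Rightarrow> ('a \<times> 'a) set \<Rightarrow> 'a set \<Rightarrow> 'a set \<Rightarrow> 'a \<Rightarrow> 'a \<Rightarrow> bool" where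
  "hop_force_ok V E U P v w \<longleftrightarrow>
     v \<in> V \<and> v \<in> U \<and> w \<in> V \<and> w \<notin> U \<and> v \<notin> P \<and> nbrs E v \<subseteq> U"

definition hop_chron_list :: "'a set \<Rightarrow> ('a \<times> 'a) set \<Rightarrow> 'a set \<Rightarrow> ('a \<times> 'a) list \<Rightarrow> bool" where
  "hop_chron_list V E B fs \<longleftrightarrow>
     (\<forall>k < length fs. hop_force_ok V E (blue_after B fs k) (fst ` set (take k fs))
                        (fst (fs ! k)) (snd (fs ! k))) \<and>
     \<not> (\<exists>v w. hop_force_ok V E (blue_after B fs (length fs)) (fst ` set fs) v w)"

definition hop_set_of_forces :: "'a set \<Rightarrow> ('a \<times> 'a) set \<Rightarrow> 'a set \<Rightarrow> ('a \<times> 'a) set \<Rightarrow> bool" where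
  "hop_set_of_forces V E B F \<longleftrightarrow> (\<exists>fs. hop_chron_list V E B fs \<and> F = set fs)"

definition hop_forcing_set :: "'a set \<Rightarrow> ('a \<times> 'a) set \<Rightarrow> 'a set \<Rightarrow> bool" where
  "hop_forcing_set V E B \<longleftrightarrow> (\<exists>fs. hop_chron_list V E B fs \<and> blue_after B fs (length fs) = V)"

text \<open>hop_upto V E B F t is the union of the layers F^(0), ..., F^(t).\<close>
primrec hop_upto :: "'a set \<Rightarrow> ('a \<times> 'a) set \<Rightarrow> 'a set \<Rightarrow> ('a \<times> 'a) set \<Rightarrow> nat \<Rightarrow> 'a set" where
  "hop_upto V E B F 0 = B"
| "hop_upto V E B F (Suc t) = hop_upto V E B F t \<union>
     {w. w \<notin> hop_upto V E B F t \<and>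
         (\<exists>v. (v, w) \<in> F \<and> v \<in> hop_upto V E B F t \<and> nbrs E v \<subseteq> hop_upto V E B F t)}"

definition pt_H_forces :: "'a set \<Rightarrow> ('a \<times> 'a) set \<Rightarrow> 'a set \<Rightarrow> ('a \<times> 'a) set \<Rightarrow> enat" where
  "pt_H_forces V E B F =
     (if \<exists>t. hop_upto V E B F t = V then enat (LEAST t. hop_upto V E B F t = V) else \<infinity>)"

definition pt_H :: "'a set \<Rightarrow> ('a \<times> 'a) set \<Rightarrow> 'a set \<Rightarrow> enat" where
  "pt_H V E B =
     (if hop_forcing_set V E B
      then (INF F \<in> {F. hop_set_of_forces V E B F}. pt_H_forces V E B F)
      else \<infinity>)"

definition th_H :: "'a set \<Rightarrow> ('a \<times> 'a) set \<Rightarrow> enat" where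
  "th_H V E = (INF B \<in> Pow V. enat (card B) + pt_H V E B)"

text \<open>Vertices of the current graph are the sets of grid positions (i,j) that have been
identified into them (this realises the tracking of empty pairs and complete edges).\<close>

definition grid_vertices :: "nat \<Rightarrow> nat \<Rightarrow> (nat \<times> nat) set set" where
  "grid_vertices a b = {{(i, j)} | i j. 1 \<le> i \<and> i \<le> a \<and> 1 \<le> j \<and> j \<le> b + 1}"

definition grid_edges :: "nat \<Rightarrow> nat \<Rightarrow> ((nat \<times> nat) set \<times> (nat \<times> nat) set) set" where
  "grid_edges a b = {({(i, j)}, {(i', j)}) | i i' j.
       1 \<le> i \<and> i \<le> a \<and> 1 \<le> i' \<and> i' \<le> a \<and> i \<noteq> i' \<and> 1 \<le> j \<and> j \<le> b + 1}"

definition merge_map :: "'v set \<Rightarrow> 'v set \<Rightarrow> 'v set \<Rightarrow> 'v set" where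
  "merge_map X Y Z = (if Z = X \<or> Z = Y then X \<union> Y else Z)"

inductive grid_reach :: "nat \<Rightarrow> nat \<Rightarrow> (nat \<times> nat) set set \<Rightarrow>
    ((nat \<times> nat) set \<times> (nat \<times> nat) set) set \<Rightarrow> bool" for a b where
  start: "grid_reach a b (grid_vertices a b) (grid_edges a b)"
| identify: "\<lbrakk> grid_reach a b VS ES; X \<in> VS; Y \<in> VS; X \<noteq> Y; (i, j) \<in> X; (i, j + 1) \<in> Y \<rbrakk>
    \<Longrightarrow> grid_reach a b (insert (X \<union> Y) (VS - {X, Y}))
          {(merge_map X Y P, merge_map X Y Q) | P Q. (P, Q) \<in> ES \<and> merge_map X Y P \<noteq> merge_map X Y Q}"
| delete: "\<lbrakk> grid_reach a b VS ES; (X, Y) \<in> ES \<rbrakk>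
    \<Longrightarrow> grid_reach a b VS (ES - {(X, Y), (Y, X)})"

end

theory Submission
  imports Defs "HOL-Library.Disjoint_Sets"
begin

text \<open>
  Think of a vertex of a graph obtained from the grid graph as a horizontal interval of cells
  in an \<open>a \<times> (b + 1)\<close> grid: identifications glue neighbouring intervals of a row, and the
  reachable graphs are exactly those whose vertices tile the grid by row intervals, with
  every edge joining intervals in different rows that share a column.

  Given such a layout, the intervals starting in column 1 (at most \<open>a\<close> of them) form a hopping
  forcing set: every interval forces the next interval of its row, and the interval starting
  in column \<open>c + 1\<close> turns blue in round \<open>c\<close>, because its predecessor and all neighbours of
  the predecessor start no later than column \<open>c\<close>. Hence \<open>th\<^sub>H \<le> a + b\<close>.

  Conversely, take an optimal initial set \<open>B\<close> and set of forces finishing after \<open>p\<close> rounds.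
  Each vertex forces at most once and is forced at most once, so the forces form chains, one
  starting at each vertex of \<open>B\<close>; these chains are the rows. A vertex occupies the columns from
  the round it turns blue until the round its successor does. A neighbour of a forcing vertex
  is blue before the force, so adjacent vertices overlap, and they cannot lie in one chain
  because the intervals of a chain are disjoint. This is a layout with \<open>a = |B|\<close> and
  \<open>b = p\<close>.
\<close>

section \<open>Interval partitions of the grid\<close>

lemma partition_on_disjointD:
  "partition_on A P \<Longrightarrow> p \<in> P \<Longrightarrow> q \<in> P \<Longrightarrow> p \<noteq> q \<Longrightarrow> p \<inter> q = {}"
  by (auto simp: partition_on_def disjnt_def dest: disjointD)

lemma partition_on_merge:
  assumes "partition_on A P" "X \<in> P" "Y \<in> P"
  shows "partition_on A (insert (X \<union> Y) (P - {X, Y}))"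
proof (rule partition_onI)
  have "\<Union> (insert (X \<union> Y) (P - {X, Y})) = \<Union> P"
    using assms(2,3) by blast
  then show "\<Union> (insert (X \<union> Y) (P - {X, Y})) = A"
    using partition_onD1[OF assms(1)] by simp
  show "{} \<notin> insert (X \<union> Y) (P - {X, Y})"
    using assms partition_onD3 by fastforce
  have disj: "p \<inter> q = {}" if "p \<in> P" "q \<in> P" "p \<noteq> q" for p q
    using partition_on_disjointD[OF assms(1) that] .
  fix p q assume "p \<in> insert (X \<union> Y) (P - {X, Y})" "q \<in> insert (X \<union> Y) (P - {X, Y})" "p \<noteq> q"
  then consider "p = X \<union> Y" "q \<in> P - {X, Y}" | "q = X \<union> Y" "p \<in> P - {X, Y}" | "p \<in> P" "q \<in> P"
    by blast
  then show "disjnt p q"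
  proof cases
    case 1
    then show ?thesis using disj[of X q] disj[of Y q] assms(2,3) by (auto simp: disjnt_def)
  next
    case 2
    then show ?thesis using disj[of p X] disj[of p Y] assms(2,3) by (auto simp: disjnt_def)
  next
    case 3
    then show ?thesis using disj \<open>p \<noteq> q\<close> by (auto simp: disjnt_def)
  qed
qed

lemma partition_on_split:
  assumes "partition_on A P" "X \<union> Y \<in> P" "X \<inter> Y = {}" "X \<noteq> {}" "Y \<noteq> {}"
  shows "partition_on A (insert X (insert Y (P - {X \<union> Y})))"
proof (rule partition_onI)
  have "\<Union> (insert X (insert Y (P - {X \<union> Y}))) = \<Union> P"
    using assms(2) by blast
  then show "\<Union> (insert X (insert Y (P - {X \<union> Y}))) = A"
    using partition_onD1[OF assms(1)] by simp
  show "{} \<notin> insert X (insert Y (P - {X \<union> Y}))"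
    using assms(4,5) partition_onD3[OF assms(1)] by blast
  fix p q assume "p \<in> insert X (insert Y (P - {X \<union> Y}))" "q \<in> insert X (insert Y (P - {X \<union> Y}))" "p \<noteq> q"
  then consider "p \<in> {X, Y}" "q \<in> {X, Y}" | "p \<in> {X, Y}" "q \<in> P - {X \<union> Y}"
    | "q \<in> {X, Y}" "p \<in> P - {X \<union> Y}" | "p \<in> P" "q \<in> P"
    by blast
  then show "disjnt p q"
  proof cases
    case 1
    then show ?thesis using assms(3) \<open>p \<noteq> q\<close> by (auto simp: disjnt_def)
  next
    case 2
    then show ?thesis using partition_on_disjointD[OF assms(1,2), of q] by (auto simp: disjnt_def)
  next
    case 3
    then show ?thesis using partition_on_disjointD[OF assms(1,2), of p] by (auto simp: disjnt_def)
  next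
    case 4
    then show ?thesis using partition_on_disjointD[OF assms(1)] \<open>p \<noteq> q\<close> by (auto simp: disjnt_def)
  qed
qed

definition row_interval :: "nat \<Rightarrow> nat \<Rightarrow> nat \<Rightarrow> (nat \<times> nat) set" where
  "row_interval i s e = {(i, c) | c. s \<le> c \<and> c \<le> e}"

lemma mem_row_interval [simp]: "(x, c) \<in> row_interval i s e \<longleftrightarrow> x = i \<and> s \<le> c \<and> c \<le> e"
  by (auto simp: row_interval_def)

lemma card_row_interval: "card (row_interval i s e) = Suc e - s"
proof -
  have "row_interval i s e = Pair i ` {s..e}"
    by (auto simp: row_interval_def)
  then show ?thesis
    by (simp add: card_image inj_on_def)
qed

definition grid_cells :: "nat \<Rightarrow> nat \<Rightarrow> (nat \<times> nat) set" where
  "grid_cells a b = {1..a} \<times> {1..b + 1}"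

definition interval_partition :: "nat \<Rightarrow> nat \<Rightarrow> (nat \<times> nat) set set \<Rightarrow> bool" where
  "interval_partition a b VS \<longleftrightarrow>
     partition_on (grid_cells a b) VS \<and> (\<forall>P\<in>VS. \<exists>i s e. P = row_interval i s e)"

definition column_overlap :: "(nat \<times> nat) set \<Rightarrow> (nat \<times> nat) set \<Rightarrow> bool" where
  "column_overlap P Q \<longleftrightarrow> (\<exists>i i' c. (i, c) \<in> P \<and> (i', c) \<in> Q \<and> i \<noteq> i')"

definition overlap_edges :: "(nat \<times> nat) set set \<Rightarrow> ((nat \<times> nat) set \<times> (nat \<times> nat) set) set" where
  "overlap_edges VS = {(P, Q). P \<in> VS \<and> Q \<in> VS \<and> P \<noteq> Q \<and> column_overlap P Q}"

abbreviation merge_edges :: "'v set \<Rightarrow> 'v set \<Rightarrow> ('v set \<times> 'v set) set \<Rightarrow> ('v set \<times> 'v set) set" where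
  "merge_edges X Y ES \<equiv> {(merge_map X Y P, merge_map X Y Q) | P Q.
      (P, Q) \<in> ES \<and> merge_map X Y P \<noteq> merge_map X Y Q}"

lemma merge_edges_overlap_edges:
  assumes "X \<in> VS" "Y \<in> VS"
  shows "merge_edges X Y (overlap_edges VS) = overlap_edges (insert (X \<union> Y) (VS - {X, Y}))"
proof (intro equalityI subsetI)
  have image: "merge_map X Y P \<in> insert (X \<union> Y) (VS - {X, Y})" if "P \<in> VS" for P
    using that by (auto simp: merge_map_def)
  have grows: "P \<subseteq> merge_map X Y P" for P
    by (auto simp: merge_map_def)
  fix z
  assume "z \<in> merge_edges X Y (overlap_edges VS)"
  then obtain P Q i i' c where z: "z = (merge_map X Y P, merge_map X Y Q)"
    "merge_map X Y P \<noteq> merge_map X Y Q" "P \<in> VS" "Q \<in> VS" "(i, c) \<in> P" "(i', c) \<in> Q" "i \<noteq> i'"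
    unfolding overlap_edges_def column_overlap_def by blast
  then show "z \<in> overlap_edges (insert (X \<union> Y) (VS - {X, Y}))"
    unfolding overlap_edges_def column_overlap_def using image grows by blast
next
  have preimage: "\<exists>P\<in>VS. merge_map X Y P = P' \<and> x \<in> P"
    if "P' \<in> insert (X \<union> Y) (VS - {X, Y})" "x \<in> P'" for P' x
    using assms that by (auto simp: merge_map_def)
  fix z
  assume "z \<in> overlap_edges (insert (X \<union> Y) (VS - {X, Y}))"
  then obtain P' Q' i i' c where z: "z = (P', Q')" "P' \<noteq> Q'" "i \<noteq> i'"
    and P': "P' \<in> insert (X \<union> Y) (VS - {X, Y})" "(i, c) \<in> P'"
    and Q': "Q' \<in> insert (X \<union> Y) (VS - {X, Y})" "(i', c) \<in> Q'"
    unfolding overlap_edges_def column_overlap_def by blast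
  obtain P Q where P: "P \<in> VS" "merge_map X Y P = P'" "(i, c) \<in> P"
    and Q: "Q \<in> VS" "merge_map X Y Q = Q'" "(i', c) \<in> Q"
    using preimage[OF P'] preimage[OF Q'] by blast
  then have "(P, Q) \<in> overlap_edges VS"
    using z unfolding overlap_edges_def column_overlap_def by auto
  then show "z \<in> merge_edges X Y (overlap_edges VS)"
    using z P Q by blast
qed

lemma interval_partition_finite: "interval_partition a b VS \<Longrightarrow> finite VS"
  unfolding interval_partition_def using finite_elements[of "grid_cells a b" VS]
  by (simp add: grid_cells_def)

lemma singleton_row_interval: "{(i, j)} = row_interval i j j"
  by (auto simp: row_interval_def)

lemma grid_vertices_eq: "grid_vertices a b = (\<lambda>x. {x}) ` grid_cells a b"
  by (auto simp: grid_vertices_def grid_cells_def)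

lemma overlap_edges_grid_vertices: "overlap_edges (grid_vertices a b) = grid_edges a b"
  by (auto simp: overlap_edges_def column_overlap_def grid_vertices_def grid_edges_def)

lemma interval_partition_grid_vertices: "interval_partition a b (grid_vertices a b)"
  unfolding interval_partition_def
proof
  show "partition_on (grid_cells a b) (grid_vertices a b)"
    unfolding grid_vertices_eq by (rule partition_on_singletons)
  show "\<forall>P\<in>grid_vertices a b. \<exists>i s e. P = row_interval i s e"
    unfolding grid_vertices_def using singleton_row_interval by blast
qed

lemma interval_partition_merge:
  assumes part: "interval_partition a b VS" and XY: "X \<in> VS" "Y \<in> VS" "X \<noteq> Y"
    and cells: "(i, j) \<in> X" "(i, j + 1) \<in> Y"
  shows "interval_partition a b (insert (X \<union> Y) (VS - {X, Y}))"
proof -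
  obtain i1 s1 e1 i2 s2 e2 where X: "X = row_interval i1 s1 e1" and Y: "Y = row_interval i2 s2 e2"
    using part XY unfolding interval_partition_def by meson
  have "X \<inter> Y = {}"
    using part partition_on_disjointD[OF _ XY] unfolding interval_partition_def by blast
  then have "(i, j + 1) \<notin> X" "(i, j) \<notin> Y"
    using cells by blast+
  then have "i1 = i" "i2 = i" "e1 = j" "s2 = j + 1" "s1 \<le> j" "j + 1 \<le> e2"
    using cells unfolding X Y by auto
  then have "X \<union> Y = row_interval i s1 e2"
    unfolding X Y row_interval_def by auto
  moreover have "partition_on (grid_cells a b) (insert (X \<union> Y) (VS - {X, Y}))"
    using part XY partition_on_merge unfolding interval_partition_def by blast
  ultimately show ?thesis
    using part unfolding interval_partition_def by blast
qed

lemma grid_reach_imp_interval_partition: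
  "grid_reach a b VS ES \<Longrightarrow> interval_partition a b VS \<and> ES \<subseteq> overlap_edges VS \<and> sym ES"
proof (induction rule: grid_reach.induct)
  case start
  have "sym (grid_edges a b)"
    unfolding grid_edges_def sym_def by blast
  then show ?case
    using interval_partition_grid_vertices overlap_edges_grid_vertices by simp
next
  case (identify VS ES X Y i j)
  have "merge_edges X Y ES \<subseteq> merge_edges X Y (overlap_edges VS)"
    using identify.IH by blast
  moreover have "sym (merge_edges X Y ES)"
    using identify.IH unfolding sym_def by blast
  ultimately show ?case
    using identify.IH interval_partition_merge[OF _ identify.hyps(2-6)]
      merge_edges_overlap_edges[OF identify.hyps(2,3)] by simp
next
  case (delete VS ES X Y)
  then show ?case
    unfolding sym_def by blast
qed

lemma interval_partition_singletons:
  assumes "interval_partition a b VS" "\<forall>P\<in>VS. card P = 1"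
  shows "VS = grid_vertices a b"
proof -
  have singleton: "\<exists>x. P = {x}" if "P \<in> VS" for P
    using assms(2) that by (simp add: card_1_singleton_iff)
  have "VS = (\<lambda>x. {x}) ` \<Union>VS"
  proof (intro equalityI subsetI)
    fix P assume "P \<in> VS"
    then show "P \<in> (\<lambda>x. {x}) ` \<Union>VS"
      using singleton by blast
  next
    fix P assume "P \<in> (\<lambda>x. {x}) ` \<Union>VS"
    then obtain x Q where "P = {x}" "x \<in> Q" "Q \<in> VS"
      by blast
    then show "P \<in> VS"
      using singleton by force
  qed
  then show ?thesis
    using assms(1) partition_onD1 unfolding interval_partition_def grid_vertices_eq by metis
qed

lemma interval_partition_split:
  assumes part: "interval_partition a b VS" and P: "row_interval i s e \<in> VS" and "s < e"
  defines "X \<equiv> row_interval i s (e - 1)" and "Y \<equiv> row_interval i e e"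
  defines "VS' \<equiv> insert X (insert Y (VS - {row_interval i s e}))"
  shows "interval_partition a b VS'" and "(\<Sum>Q\<in>VS'. card Q - 1) < (\<Sum>Q\<in>VS. card Q - 1)"
    and "insert (X \<union> Y) (VS' - {X, Y}) = VS"
proof -
  have XY: "X \<union> Y = row_interval i s e" "X \<inter> Y = {}" "X \<noteq> {}" "Y \<noteq> {}"
    using \<open>s < e\<close> unfolding X_def Y_def row_interval_def by auto
  then have "X \<noteq> Y"
    by blast
  have "Q \<inter> row_interval i s e = {}" if "Q \<in> VS - {row_interval i s e}" for Q
    using part partition_on_disjointD[OF _ _ P, of _ Q] that unfolding interval_partition_def by blast
  then have not_old: "X \<notin> VS - {row_interval i s e}" "Y \<notin> VS - {row_interval i s e}"
    using XY by blast+
  have "partition_on (grid_cells a b) VS'"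
    using part partition_on_split[of "grid_cells a b" VS X Y] XY P
    unfolding interval_partition_def VS'_def by simp
  then show "interval_partition a b VS'"
    using part unfolding interval_partition_def VS'_def X_def Y_def by blast
  have "finite VS"
    using part by (rule interval_partition_finite)
  then have "(\<Sum>Q\<in>VS'. card Q - 1) = (card X - 1) + (card Y - 1) + (\<Sum>Q\<in>VS - {row_interval i s e}. card Q - 1)"
    using not_old \<open>X \<noteq> Y\<close> unfolding VS'_def by simp
  also have "\<dots> < (card (row_interval i s e) - 1) + (\<Sum>Q\<in>VS - {row_interval i s e}. card Q - 1)"
    using \<open>s < e\<close> unfolding X_def Y_def card_row_interval by simp
  also have "\<dots> = (\<Sum>Q\<in>VS. card Q - 1)"
    using \<open>finite VS\<close> P by (simp add: sum.remove)
  finally show "(\<Sum>Q\<in>VS'. card Q - 1) < (\<Sum>Q\<in>VS. card Q - 1)" .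
  show "insert (X \<union> Y) (VS' - {X, Y}) = VS"
    using not_old XY P unfolding VS'_def by auto
qed

lemma interval_partition_grid_reach:
  "interval_partition a b VS \<Longrightarrow> grid_reach a b VS (overlap_edges VS)"
  \<comment> \<open>induction on the number of identifications needed to build \<open>VS\<close> from singletons\<close>
proof (induction "\<Sum>P\<in>VS. card P - 1" arbitrary: VS rule: less_induct)
  case less
  note part = less.prems
  show ?case
  proof (cases "\<forall>P\<in>VS. card P = 1")
    case True
    then show ?thesis
      using interval_partition_singletons[OF part] overlap_edges_grid_vertices grid_reach.start by simp
  next
    case False
    then obtain P where P: "P \<in> VS" "card P \<noteq> 1"
      by blast
    moreover obtain i s e where Pie: "P = row_interval i s e"
      using part P unfolding interval_partition_def by blast
    moreover have "P \<noteq> {}"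
      using part P partition_onD3 unfolding interval_partition_def by blast
    ultimately have "s < e"
      by (cases "s < e") (auto simp: card_row_interval)
    define X where "X = row_interval i s (e - 1)"
    define Y where "Y = row_interval i e e"
    define VS' where "VS' = insert X (insert Y (VS - {P}))"
    note split = interval_partition_split[OF part P(1)[unfolded Pie] \<open>s < e\<close>,
        folded X_def Y_def Pie, folded VS'_def]
    have reach: "grid_reach a b VS' (overlap_edges VS')"
      using less.hyps split(1,2) by blast
    have cells: "(i, e - 1) \<in> X" "(i, e - 1 + 1) \<in> Y" "(i, e - 1) \<notin> Y"
      using \<open>s < e\<close> by (auto simp: X_def Y_def)
    then have "X \<noteq> Y"
      by blast
    moreover have "X \<in> VS'" "Y \<in> VS'"
      unfolding VS'_def by simp_all
    ultimately have "grid_reach a b (insert (X \<union> Y) (VS' - {X, Y})) (merge_edges X Y (overlap_edges VS'))"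
      using grid_reach.identify[OF reach _ _ _ cells(1,2)] by blast
    then show ?thesis
      using merge_edges_overlap_edges[of X VS' Y] split(3) unfolding VS'_def by simp
  qed
qed

lemma grid_reach_delete_edges:
  assumes "grid_reach a b VS ES" "finite ES" "E' \<subseteq> ES" "sym E'"
  shows "grid_reach a b VS E'"
  using assms
proof (induction "card (ES - E')" arbitrary: ES rule: less_induct)
  case less
  show ?case
  proof (cases "ES = E'")
    case True
    then show ?thesis
      using less.prems by simp
  next
    case False
    then obtain X Y where XY: "(X, Y) \<in> ES - E'"
      using less.prems by auto
    then have "(Y, X) \<notin> E'"
      using \<open>sym E'\<close> unfolding sym_def by blast
    have "grid_reach a b VS (ES - {(X, Y), (Y, X)})"
      using less.prems(1) XY by (auto intro: grid_reach.delete)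
    moreover have "card (ES - {(X, Y), (Y, X)} - E') < card (ES - E')"
      using XY less.prems(2) by (intro psubset_card_mono) auto
    ultimately show ?thesis
      using less.hyps less.prems XY \<open>(Y, X) \<notin> E'\<close> by auto
  qed
qed

theorem grid_reach_iff:
  "grid_reach a b VS ES \<longleftrightarrow> interval_partition a b VS \<and> ES \<subseteq> overlap_edges VS \<and> sym ES"
proof
  assume "interval_partition a b VS \<and> ES \<subseteq> overlap_edges VS \<and> sym ES"
  moreover from this have "finite (overlap_edges VS)"
    using interval_partition_finite by (auto simp: overlap_edges_def intro: finite_subset[of _ "VS \<times> VS"])
  ultimately show "grid_reach a b VS ES"
    using interval_partition_grid_reach grid_reach_delete_edges finite_subset by meson
qed (rule grid_reach_imp_interval_partition)

lemma interval_partition_block: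
  assumes part: "interval_partition a b VS" and "P \<in> VS"
  obtains i s e where "P = row_interval i s e" "i \<in> {1..a}" "1 \<le> s" "s \<le> e" "e \<le> b + 1"
proof -
  obtain i s e where P: "P = row_interval i s e"
    using assms unfolding interval_partition_def by blast
  have "partition_on (grid_cells a b) VS"
    using part unfolding interval_partition_def by blast
  then have "P \<noteq> {}" "P \<subseteq> grid_cells a b"
    using \<open>P \<in> VS\<close> by (auto dest: partition_onD1 partition_onD3)
  then have "s \<le> e" "(i, s) \<in> grid_cells a b" "(i, e) \<in> grid_cells a b"
    unfolding P by (auto simp: row_interval_def)
  then show thesis
    using that P by (simp add: grid_cells_def)
qed

section \<open>Interval layouts\<close>

text \<open>Vertex \<open>v\<close> occupies the cells \<open>(row v, c)\<close> with \<open>start v \<le> c \<le> stop v\<close>.\<close>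

locale interval_layout =
  fixes V :: "'a set" and E :: "('a \<times> 'a) set" and a b :: nat
    and row start stop :: "'a \<Rightarrow> nat"
  assumes graph: "simple_graph V E"
    and row_range: "v \<in> V \<Longrightarrow> row v \<in> {1..a}"
    and column_range: "v \<in> V \<Longrightarrow> 1 \<le> start v \<and> start v \<le> stop v \<and> stop v \<le> b + 1"
    and covers: "i \<in> {1..a} \<Longrightarrow> c \<in> {1..b + 1} \<Longrightarrow> \<exists>v\<in>V. row v = i \<and> start v \<le> c \<and> c \<le> stop v"
    and disjoint: "\<lbrakk>u \<in> V; v \<in> V; row u = row v; start u \<le> c; c \<le> stop u; start v \<le> c; c \<le> stop v\<rbrakk>
      \<Longrightarrow> u = v"
    and edges_overlap: "(u, v) \<in> E \<Longrightarrow> row u \<noteq> row v \<and> start v \<le> stop u \<and> start u \<le> stop v"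
begin

lemma edges_subset: "E \<subseteq> V \<times> V" and sym_edges: "sym E" and no_loops: "(v, v) \<notin> E"
  using graph unfolding simple_graph_def by auto

definition cells :: "'a \<Rightarrow> (nat \<times> nat) set" where
  "cells v = row_interval (row v) (start v) (stop v)"

lemma start_cell: "v \<in> V \<Longrightarrow> (row v, start v) \<in> cells v"
  using column_range by (simp add: cells_def)

lemma inj_on_cells: "inj_on cells V"
proof (rule inj_onI)
  fix u v assume uv: "u \<in> V" "v \<in> V" "cells u = cells v"
  then have "row u = row v" "start v \<le> start u" "start u \<le> stop v"
    using start_cell[of u] by (simp_all add: cells_def)
  then show "u = v"
    using disjoint[OF uv(1,2)] column_range[OF uv(1)] by blast
qed

lemma interval_partition_cells: "interval_partition a b (cells ` V)"
  unfolding interval_partition_def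
proof (intro conjI partition_onI)
  show "\<Union> (cells ` V) = grid_cells a b"
  proof (intro equalityI subsetI)
    fix x assume "x \<in> \<Union> (cells ` V)"
    then obtain v i c where "v \<in> V" "x = (i, c)" "(i, c) \<in> cells v"
      by (metis UN_E surj_pair)
    then show "x \<in> grid_cells a b"
      using row_range[of v] column_range[of v] by (simp add: cells_def grid_cells_def)
  next
    fix x assume "x \<in> grid_cells a b"
    then obtain i c where "x = (i, c)" "i \<in> {1..a}" "c \<in> {1..b + 1}"
      by (auto simp: grid_cells_def)
    moreover obtain v where "v \<in> V" "row v = i" "start v \<le> c" "c \<le> stop v"
      using covers calculation(2,3) by blast
    ultimately show "x \<in> \<Union> (cells ` V)"
      by (auto simp: cells_def)
  qed
  show "disjnt P Q" if PQ: "P \<in> cells ` V" "Q \<in> cells ` V" "P \<noteq> Q" for P Q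
  proof -
    obtain u v where uv: "u \<in> V" "v \<in> V" "P = cells u" "Q = cells v" "u \<noteq> v"
      using PQ by blast
    have "(i, c) \<notin> cells u \<inter> cells v" for i c
      using disjoint[OF uv(1,2), of c] uv(5) by (auto simp: cells_def)
    then show ?thesis
      unfolding disjnt_def uv(3,4) by auto
  qed
  show "{} \<notin> cells ` V"
    using start_cell by blast
  show "\<forall>P\<in>cells ` V. \<exists>i s e. P = row_interval i s e"
    unfolding cells_def by blast
qed

lemma grid_reach_cells: "grid_reach a b (cells ` V) (map_prod cells cells ` E)"
  unfolding grid_reach_iff
proof (intro conjI interval_partition_cells subsetI)
  fix z assume "z \<in> map_prod cells cells ` E"
  then obtain u v where z: "z = (cells u, cells v)" and uv: "(u, v) \<in> E"
    by auto
  then have "u \<in> V" "v \<in> V" "u \<noteq> v"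
    using edges_subset no_loops by auto
  then have "cells u \<noteq> cells v"
    using inj_on_cells by (meson inj_onD)
  moreover have "column_overlap (cells u) (cells v)"
    unfolding column_overlap_def cells_def
    using edges_overlap[OF uv] column_range[OF \<open>u \<in> V\<close>] column_range[OF \<open>v \<in> V\<close>]
    by (intro exI[of _ "row u"] exI[of _ "row v"] exI[of _ "max (start u) (start v)"]) auto
  ultimately show "z \<in> overlap_edges (cells ` V)"
    using z \<open>u \<in> V\<close> \<open>v \<in> V\<close> unfolding overlap_edges_def by blast
next
  show "sym (map_prod cells cells ` E)"
    using sym_edges unfolding sym_def by auto
qed

lemma graph_iso_cells: "graph_iso V E (cells ` V) (map_prod cells cells ` E)"
  unfolding graph_iso_def
proof (intro exI conjI ballI)
  show "bij_betw cells V (cells ` V)"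
    using inj_on_cells by (simp add: bij_betw_imageI)
  fix u v assume uv: "u \<in> V" "v \<in> V"
  show "(u, v) \<in> E \<longleftrightarrow> (cells u, cells v) \<in> map_prod cells cells ` E"
  proof
    assume "(cells u, cells v) \<in> map_prod cells cells ` E"
    then obtain x y where xy: "(x, y) \<in> E" "cells u = cells x" "cells v = cells y"
      by auto
    then have "x = u" "y = v"
      using edges_subset uv inj_on_cells by (auto dest: inj_onD)
    then show "(u, v) \<in> E"
      using xy(1) by simp
  qed auto
qed

end

lemma grid_reach_imp_interval_layout:
  assumes graph: "simple_graph V E" and reach: "grid_reach a b VS ES" and iso: "graph_iso V E VS ES"
  obtains row start stop where "interval_layout V E a b row start stop"
proof -
  obtain f where bij: "bij_betw f V VS"
    and edge_iff: "\<And>u v. u \<in> V \<Longrightarrow> v \<in> V \<Longrightarrow> (u, v) \<in> E \<longleftrightarrow> (f u, f v) \<in> ES"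
    using iso unfolding graph_iso_def by blast
  have part: "interval_partition a b VS" and ES: "ES \<subseteq> overlap_edges VS"
    using reach unfolding grid_reach_iff by auto
  have cover: "\<Union> (f ` V) = grid_cells a b"
    using part bij_betw_imp_surj_on[OF bij] unfolding interval_partition_def partition_on_def by simp
  have "\<exists>i s e. f v = row_interval i s e \<and> i \<in> {1..a} \<and> 1 \<le> s \<and> s \<le> e \<and> e \<le> b + 1"
    if "v \<in> V" for v
    using interval_partition_block[OF part bij_betwE[OF bij, rule_format, OF that]] by metis
  then obtain row start stop where f: "\<And>v. v \<in> V \<Longrightarrow> f v = row_interval (row v) (start v) (stop v)"
    and ranges: "\<And>v. v \<in> V \<Longrightarrow> row v \<in> {1..a} \<and> 1 \<le> start v \<and> start v \<le> stop v \<and> stop v \<le> b + 1"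
    by metis
  have "interval_layout V E a b row start stop"
  proof (unfold_locales)
    fix i c assume "i \<in> {1..a}" "c \<in> {1..b + 1}"
    then have "(i, c) \<in> \<Union> (f ` V)"
      using cover by (simp add: grid_cells_def)
    then show "\<exists>v\<in>V. row v = i \<and> start v \<le> c \<and> c \<le> stop v"
      using f by auto
  next
    fix u v c assume uv: "u \<in> V" "v \<in> V" "row u = row v" "start u \<le> c" "c \<le> stop u" "start v \<le> c" "c \<le> stop v"
    then have "f u = f v"
      using part partition_on_disjointD bij_betwE[OF bij] f unfolding interval_partition_def
      by (metis IntI empty_iff mem_row_interval)
    then show "u = v"
      using bij uv(1,2) unfolding bij_betw_def by (meson inj_onD)
  next
    fix u v assume uv: "(u, v) \<in> E"
    then have "u \<in> V" "v \<in> V"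
      using graph unfolding simple_graph_def by auto
    then have "(f u, f v) \<in> overlap_edges VS"
      using uv edge_iff ES by blast
    then obtain i i' c where "(i, c) \<in> f u" "(i', c) \<in> f v" "i \<noteq> i'"
      unfolding overlap_edges_def column_overlap_def by blast
    then show "row u \<noteq> row v \<and> start v \<le> stop u \<and> start u \<le> stop v"
      using f \<open>u \<in> V\<close> \<open>v \<in> V\<close> by auto
  qed (use graph ranges in auto)
  then show thesis
    by (rule that)
qed

lemma hop_upto_mono: "m \<le> n \<Longrightarrow> hop_upto V E B F m \<subseteq> hop_upto V E B F n"
  by (induction n) (auto simp: le_Suc_eq)

lemma hop_upto_subset: "B \<subseteq> V \<Longrightarrow> F \<subseteq> V \<times> V \<Longrightarrow> hop_upto V E B F n \<subseteq> V"
  by (induction n) auto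

lemma th_H_le_chron_list:
  assumes "B \<subseteq> V" "hop_chron_list V E B fs" "blue_after B fs (length fs) = V"
    and "hop_upto V E B (set fs) n = V"
  shows "th_H V E \<le> enat (card B + n)"
proof -
  have "th_H V E \<le> enat (card B) + pt_H V E B"
    unfolding th_H_def using assms(1) by (auto intro: INF_lower)
  also have "pt_H V E B \<le> pt_H_forces V E B (set fs)"
    using assms(2,3) unfolding pt_H_def hop_forcing_set_def hop_set_of_forces_def
    by (auto intro: INF_lower)
  also have "pt_H_forces V E B (set fs) \<le> enat n"
    unfolding pt_H_forces_def using assms(4) by (auto intro: Least_le)
  finally show ?thesis
    by simp
qed

lemma th_H_le_imp_chron_list:
  assumes "th_H V E \<le> enat t"
  obtains B fs n where "B \<subseteq> V" "hop_chron_list V E B fs" "hop_upto V E B (set fs) n = V"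
    "card B + n \<le> t"
proof -
  \<comment> \<open>both infima are attained because \<open>enat\<close> is well-ordered\<close>
  obtain B where B: "B \<subseteq> V" "th_H V E = enat (card B) + pt_H V E B"
    using wellorder_InfI[of "enat (card {}) + pt_H V E {}" "(\<lambda>B. enat (card B) + pt_H V E B) ` Pow V"]
    unfolding th_H_def by blast
  then have pt_le: "enat (card B) + pt_H V E B \<le> enat t"
    using assms by simp
  then have "hop_forcing_set V E B"
    unfolding pt_H_def by (cases "hop_forcing_set V E B") auto
  then obtain F where F: "hop_set_of_forces V E B F" "pt_H V E B = pt_H_forces V E B F"
    using wellorder_InfI[of _ "pt_H_forces V E B ` {F. hop_set_of_forces V E B F}"]
    unfolding pt_H_def hop_forcing_set_def hop_set_of_forces_def by auto
  then obtain fs where fs: "hop_chron_list V E B fs" "F = set fs"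
    unfolding hop_set_of_forces_def by blast
  have ex: "\<exists>n. hop_upto V E B F n = V"
    using F(2) pt_le unfolding pt_H_forces_def by (auto split: if_splits)
  define n where "n = (LEAST n. hop_upto V E B F n = V)"
  have n: "hop_upto V E B F n = V" "pt_H V E B = enat n"
    using ex F(2) LeastI_ex[OF ex] unfolding n_def pt_H_forces_def by simp_all
  then show thesis
    using that B(1) fs pt_le by simp
qed

lemma nth_in_set_take: "i < j \<Longrightarrow> j \<le> length xs \<Longrightarrow> xs ! i \<in> set (take j xs)"
  by (metis length_take min.absorb2 nth_mem nth_take)

lemma distinct_iff_nth_notin_take: "distinct xs \<longleftrightarrow> (\<forall>k<length xs. xs ! k \<notin> set (take k xs))"
proof (intro iffI allI impI)
  fix k assume "distinct xs" "k < length xs"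
  then show "xs ! k \<notin> set (take k xs)"
    using set_take_disj_set_drop_if_distinct[of xs k k] by (metis Cons_nth_drop_Suc disjoint_iff list.set_intros(1) order.refl)
next
  assume notin: "\<forall>k<length xs. xs ! k \<notin> set (take k xs)"
  show "distinct xs"
    unfolding distinct_conv_nth
  proof (intro allI impI)
    fix i j assume ij: "i < length xs" "j < length xs" "i \<noteq> j"
    then consider "i < j" | "j < i"
      by linarith
    then show "xs ! i \<noteq> xs ! j"
    proof cases
      case 1
      then have "xs ! i \<in> set (take j xs)"
        using ij by (simp add: nth_in_set_take)
      then show ?thesis
        using notin ij(2) by metis
    next
      case 2
      then have "xs ! j \<in> set (take i xs)"
        using ij by (simp add: nth_in_set_take)
      then show ?thesis
        using notin ij(1) by metis
    qed
  qed
qed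

lemma sorted_key_less_in_take:
  assumes "sorted (map f xs)" "k < length xs" "x \<in> set xs" "f x < f (xs ! k)"
  shows "x \<in> set (take k xs)"
proof -
  obtain j where j: "j < length xs" "xs ! j = x"
    using assms(3) by (metis in_set_conv_nth)
  have "j < k"
  proof (rule ccontr)
    assume "\<not> j < k"
    then have "f (xs ! k) \<le> f (xs ! j)"
      using sorted_nth_mono[OF assms(1), of k j] j(1) by simp
    then show False
      using j(2) assms(4) by simp
  qed
  then show ?thesis
    using j assms(2) nth_in_set_take by (metis less_imp_le_nat)
qed

lemma hop_chron_list_sortedI:
  fixes key :: "'a \<Rightarrow> nat"
  assumes sorted: "sorted (map (key \<circ> fst) fs)"
    and distinct: "distinct (map fst fs)" "distinct (map snd fs)"
    and forces: "\<And>v w. (v, w) \<in> set fs \<Longrightarrow> v \<in> V \<and> w \<in> V \<and> w \<notin> B"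
    and ready: "\<And>v w. (v, w) \<in> set fs \<Longrightarrow>
      insert v (nbrs E v) \<subseteq> B \<union> {w'. \<exists>v'. (v', w') \<in> set fs \<and> key v' < key v}"
    and complete: "B \<union> snd ` set fs = V"
  shows "hop_chron_list V E B fs"
  unfolding hop_chron_list_def
proof (intro conjI allI impI)
  fix k assume k: "k < length fs"
  obtain v w where vw: "fs ! k = (v, w)"
    by fastforce
  have vw_in: "(v, w) \<in> set fs"
    using k vw by (metis nth_mem)
  have earlier: "{w'. \<exists>v'. (v', w') \<in> set fs \<and> key v' < key v} \<subseteq> snd ` set (take k fs)"
  proof
    fix w' assume "w' \<in> {w'. \<exists>v'. (v', w') \<in> set fs \<and> key v' < key v}"
    then obtain v' where "(v', w') \<in> set fs" "key v' < key v"
      by blast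
    then have "(v', w') \<in> set (take k fs)"
      using sorted_key_less_in_take[OF sorted k, of "(v', w')"] vw by simp
    then show "w' \<in> snd ` set (take k fs)"
      by force
  qed
  have "fst (fs ! k) \<notin> fst ` set (take k fs)" "snd (fs ! k) \<notin> snd ` set (take k fs)"
    using distinct k unfolding distinct_iff_nth_notin_take by (simp_all add: take_map)
  moreover have "insert v (nbrs E v) \<subseteq> B \<union> snd ` set (take k fs)"
    using ready[OF vw_in] earlier by blast
  ultimately show "hop_force_ok V E (blue_after B fs k) (fst ` set (take k fs)) (fst (fs ! k)) (snd (fs ! k))"
    using forces[OF vw_in] unfolding hop_force_ok_def blue_after_def vw by simp
next
  show "\<not> (\<exists>v w. hop_force_ok V E (blue_after B fs (length fs)) (fst ` set fs) v w)"
    using complete unfolding hop_force_ok_def blue_after_def by auto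
qed

lemma hop_chron_list_forces:
  assumes "hop_chron_list V E B fs"
  shows "set fs \<subseteq> V \<times> V" "distinct (map fst fs)" "distinct (map snd fs)" "Range (set fs) \<inter> B = {}"
proof -
  have "hop_force_ok V E (blue_after B fs k) (fst ` set (take k fs)) (fst (fs ! k)) (snd (fs ! k))"
    if "k < length fs" for k
    using assms that unfolding hop_chron_list_def by blast
  then have ok: "fs ! k \<in> V \<times> V \<and> snd (fs ! k) \<notin> B \<and>
      fst (fs ! k) \<notin> fst ` set (take k fs) \<and> snd (fs ! k) \<notin> snd ` set (take k fs)"
    if "k < length fs" for k
    using that unfolding hop_force_ok_def blue_after_def by (simp add: mem_Times_iff)
  then show "set fs \<subseteq> V \<times> V"
    by (metis in_set_conv_nth subsetI)
  show "distinct (map fst fs)" "distinct (map snd fs)"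
    using ok unfolding distinct_iff_nth_notin_take by (simp_all add: take_map)
  show "Range (set fs) \<inter> B = {}"
    using ok by (force simp: in_set_conv_nth)
qed

lemma single_valued_if_distinct_map_fst: "distinct (map fst xs) \<Longrightarrow> single_valued (set xs)"
  unfolding single_valued_def distinct_map inj_on_def by fastforce

lemma single_valued_converse_if_distinct_map_snd: "distinct (map snd xs) \<Longrightarrow> single_valued ((set xs)\<inverse>)"
  unfolding single_valued_def distinct_map inj_on_def by fastforce


section \<open>A layout yields a hopping forcing strategy\<close>

context interval_layout
begin

definition sources :: "'a set" where
  "sources = {v \<in> V. start v = 1}"

definition successions :: "('a \<times> 'a) set" where
  "successions = {(u, w). u \<in> V \<and> w \<in> V \<and> row w = row u \<and> start w = Suc (stop u)}"

lemma card_sources_le: "card sources \<le> a"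
proof -
  have "inj_on row sources"
  proof (rule inj_onI)
    fix u v assume "u \<in> sources" "v \<in> sources" "row u = row v"
    then show "u = v"
      using disjoint[of u v 1] column_range[of u] column_range[of v] by (simp add: sources_def)
  qed
  moreover have "row ` sources \<subseteq> {1..a}"
    using row_range by (auto simp: sources_def)
  ultimately show ?thesis
    using card_inj_on_le[of row sources "{1..a}"] by simp
qed

lemma has_predecessor:
  assumes w: "w \<in> V" "start w \<noteq> 1"
  shows "\<exists>u. (u, w) \<in> successions"
proof -
  have "start w - 1 \<in> {1..b + 1}"
    using column_range[OF w(1)] w(2) by auto
  then obtain u where u: "u \<in> V" "row u = row w" "start u \<le> start w - 1" "start w - 1 \<le> stop u"
    using covers row_range[OF w(1)] by blast
  have "stop u < start w"
  proof (rule ccontr)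
    assume "\<not> stop u < start w"
    moreover have "start u \<le> start w"
      using u(3) by linarith
    ultimately have "u = w"
      using disjoint[of u w "start w"] u column_range[OF w(1)] w(1) by simp
    then have "start w \<le> start w - 1"
      using u(3) by simp
    then show False
      using column_range[OF w(1)] w(2) by linarith
  qed
  then have "(u, w) \<in> successions"
    using u w(1) unfolding successions_def by auto
  then show ?thesis
    by blast
qed

lemma inj_on_fst_successions: "inj_on fst successions"
proof (rule inj_onI)
  fix x y assume "x \<in> successions" "y \<in> successions" "fst x = fst y"
  then obtain u w w' where "x = (u, w)" "y = (u, w')" "w \<in> V" "w' \<in> V" "row w = row w'"
    "start w = Suc (stop u)" "start w' = Suc (stop u)"
    unfolding successions_def by auto
  then show "x = y"
    using disjoint[of w w' "Suc (stop u)"] column_range[of w] column_range[of w'] by simp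
qed

lemma inj_on_snd_successions: "inj_on snd successions"
proof (rule inj_onI)
  fix x y assume "x \<in> successions" "y \<in> successions" "snd x = snd y"
  then obtain u u' w where "x = (u, w)" "y = (u', w)" "u \<in> V" "u' \<in> V" "row u = row u'"
    "stop u = stop u'"
    unfolding successions_def by auto
  then show "x = y"
    using disjoint[of u u' "stop u"] column_range[of u] column_range[of u'] by simp
qed

lemma started_before:
  assumes "x \<in> V" "start x \<le> k"
  shows "x \<in> sources \<union> {w. \<exists>u. (u, w) \<in> successions \<and> stop u < k}"
proof (cases "start x = 1")
  case True
  then show ?thesis
    using assms(1) by (simp add: sources_def)
next
  case False
  then obtain u where "(u, x) \<in> successions"
    using has_predecessor assms(1) by blast
  moreover from this have "stop u < k"
    using assms(2) by (simp add: successions_def)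
  ultimately show ?thesis
    by blast
qed

lemma blue_by_start: "v \<in> V \<Longrightarrow> start v \<le> Suc n \<Longrightarrow> v \<in> hop_upto V E sources successions n"
proof (induction n arbitrary: v)
  case 0
  then show ?case
    using column_range[OF 0(1)] by (simp add: sources_def)
next
  case (Suc n)
  show ?case
  proof (cases "start v \<le> Suc n")
    case True
    then show ?thesis
      using Suc by simp
  next
    case False
    then obtain u where u: "(u, v) \<in> successions"
      using has_predecessor Suc.prems(1) by fastforce
    then have "u \<in> V" "stop u = Suc n"
      using False Suc.prems(2) by (auto simp: successions_def)
    then have "u \<in> hop_upto V E sources successions n"
      using Suc.IH[OF \<open>u \<in> V\<close>] column_range[OF \<open>u \<in> V\<close>] by simp
    moreover have "nbrs E u \<subseteq> hop_upto V E sources successions n"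
    proof
      fix x assume "x \<in> nbrs E u"
      then have "(u, x) \<in> E"
        by (simp add: nbrs_def)
      then have "x \<in> V" "start x \<le> Suc n"
        using edges_subset edges_overlap[of u x] \<open>stop u = Suc n\<close> by auto
      then show "x \<in> hop_upto V E sources successions n"
        by (rule Suc.IH)
    qed
    ultimately show ?thesis
      using u by auto
  qed
qed

lemma sources_successions_cover: "sources \<union> snd ` successions = V"
proof (intro equalityI subsetI)
  fix v assume "v \<in> V"
  then show "v \<in> sources \<union> snd ` successions"
    using started_before[of v "start v"] by force
qed (auto simp: sources_def successions_def)

lemma successions_ready:
  assumes "(v, w) \<in> successions"
  shows "insert v (nbrs E v) \<subseteq> sources \<union> {w'. \<exists>v'. (v', w') \<in> successions \<and> stop v' < stop v}"
proof
  fix x assume "x \<in> insert v (nbrs E v)"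
  then have "x \<in> V" "start x \<le> stop v"
    using assms edges_subset edges_overlap column_range by (auto simp: nbrs_def successions_def)
  then show "x \<in> sources \<union> {w'. \<exists>v'. (v', w') \<in> successions \<and> stop v' < stop v}"
    by (rule started_before)
qed

lemma successions_chron_list:
  obtains fs where "set fs = successions" "hop_chron_list V E sources fs"
    "blue_after sources fs (length fs) = V"
proof -
  have "successions \<subseteq> V \<times> V"
    unfolding successions_def by auto
  then have "finite successions"
    using graph finite_subset unfolding simple_graph_def by blast
  then obtain xs where xs: "set xs = successions" "distinct xs"
    using finite_distinct_list by blast
  define fs where "fs = sort_key (stop \<circ> fst) xs"
  have fs: "set fs = successions" "distinct fs" "sorted (map (stop \<circ> fst) fs)"
    using xs unfolding fs_def by auto
  have "hop_chron_list V E sources fs"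
  proof (rule hop_chron_list_sortedI[OF fs(3)])
    show "distinct (map fst fs)" "distinct (map snd fs)"
      using fs inj_on_fst_successions inj_on_snd_successions by (simp_all add: distinct_map)
    show "v \<in> V \<and> w \<in> V \<and> w \<notin> sources" if "(v, w) \<in> set fs" for v w
    proof -
      have "v \<in> V" "w \<in> V" "start w = Suc (stop v)"
        using that fs(1) by (simp_all add: successions_def)
      then show ?thesis
        using column_range[of v] by (simp add: sources_def)
    qed
  qed (use fs(1) successions_ready sources_successions_cover in auto)
  then show thesis
    using that fs(1) sources_successions_cover unfolding blue_after_def by simp
qed

theorem th_H_le: "th_H V E \<le> enat (a + b)"
proof -
  obtain fs where fs: "set fs = successions" "hop_chron_list V E sources fs"
    "blue_after sources fs (length fs) = V"
    by (rule successions_chron_list)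
  have "hop_upto V E sources successions b = V"
  proof (intro equalityI subsetI)
    show "x \<in> V" if "x \<in> hop_upto V E sources successions b" for x
      using that hop_upto_subset[of sources V successions E b]
      unfolding sources_def successions_def by blast
    show "x \<in> hop_upto V E sources successions b" if "x \<in> V" for x
    proof (rule blue_by_start[OF that])
      show "start x \<le> Suc b"
        using column_range[OF that] by simp
    qed
  qed
  then have "th_H V E \<le> enat (card sources + b)"
    using th_H_le_chron_list[of sources V E fs b] fs by (simp add: sources_def)
  then show ?thesis
    using card_sources_le by (meson add_right_mono enat_ord_simps(1) order.trans)
qed

end

section \<open>An optimal strategy yields a layout\<close>

locale forcing_process =
  fixes V :: "'a set" and E :: "('a \<times> 'a) set" and B :: "'a set" and F :: "('a \<times> 'a) set"
    and p :: nat
  assumes graph: "simple_graph V E"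
    and sources_subset: "B \<subseteq> V" and forces_subset: "F \<subseteq> V \<times> V"
    and forces_once: "single_valued F" and forced_once: "single_valued (F\<inverse>)"
    and sources_not_forced: "Range F \<inter> B = {}"
    and all_blue: "hop_upto V E B F p = V"

lemma th_H_le_imp_forcing_process:
  assumes graph: "simple_graph V E" and le: "th_H V E \<le> enat t"
  shows "\<exists>B F. forcing_process V E B F (t - card B) \<and> card B \<le> t"
proof -
  obtain B fs n where B: "B \<subseteq> V" and fs: "hop_chron_list V E B fs"
    and n: "hop_upto V E B (set fs) n = V" "card B + n \<le> t"
    using th_H_le_imp_chron_list[OF le] by blast
  have "V \<subseteq> hop_upto V E B (set fs) (t - card B)"
    using n hop_upto_mono[of n "t - card B" V E B "set fs"] by simp
  moreover have "hop_upto V E B (set fs) (t - card B) \<subseteq> V"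
    using hop_upto_subset[OF B hop_chron_list_forces(1)[OF fs]] .
  ultimately have "hop_upto V E B (set fs) (t - card B) = V"
    by blast
  then have "forcing_process V E B (set fs) (t - card B)"
    using graph B hop_chron_list_forces[OF fs]
    by unfold_locales (auto intro: single_valued_if_distinct_map_fst single_valued_converse_if_distinct_map_snd)
  then show ?thesis
    using n(2) by auto
qed

context forcing_process
begin

lemma edges_subset: "E \<subseteq> V \<times> V" and sym_edges: "sym E" and no_loops: "(v, v) \<notin> E"
    and finite_vertices: "finite V"
  using graph unfolding simple_graph_def by auto

definition time :: "'a \<Rightarrow> nat" where
  "time v = (LEAST n. v \<in> hop_upto V E B F n)"

lemma time_le: "v \<in> hop_upto V E B F n \<Longrightarrow> time v \<le> n"
  unfolding time_def by (rule Least_le)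

lemma blue_at_time: "v \<in> V \<Longrightarrow> v \<in> hop_upto V E B F (time v)"
  unfolding time_def using all_blue by (metis LeastI)

lemma time_le_p: "v \<in> V \<Longrightarrow> time v \<le> p"
  using all_blue time_le by blast

lemma time_source: "r \<in> B \<Longrightarrow> time r = 0"
  using time_le[of r 0] by simp

lemma forced_by:
  assumes "w \<in> V" "w \<notin> B"
  obtains u where "(u, w) \<in> F" "time u < time w" "\<forall>x\<in>nbrs E u. time x < time w"
proof -
  have w: "w \<in> hop_upto V E B F (time w)"
    using blue_at_time assms(1) .
  then obtain n where n: "time w = Suc n"
    using assms(2) by (cases "time w") auto
  then have "w \<notin> hop_upto V E B F n"
    using time_le[of w n] by auto
  then obtain u where u: "(u, w) \<in> F" "u \<in> hop_upto V E B F n" "nbrs E u \<subseteq> hop_upto V E B F n"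
    using w n by auto
  have "time u < time w"
    using time_le[OF u(2)] n by simp
  moreover have "\<forall>x\<in>nbrs E u. time x < time w"
    using time_le u(3) n by (auto simp: less_Suc_eq_le)
  ultimately show thesis
    by (rule that[OF u(1)])
qed

lemma force_time:
  assumes "(u, w) \<in> F"
  shows "time u < time w" "x \<in> nbrs E u \<Longrightarrow> time x < time w"
proof -
  have "w \<in> V" "w \<notin> B"
    using assms forces_subset sources_not_forced by auto
  then obtain u' where u': "(u', w) \<in> F" "time u' < time w" "\<forall>x\<in>nbrs E u'. time x < time w"
    by (rule forced_by)
  have "u' = u"
    using forced_once u'(1) assms by (auto dest: single_valuedD)
  then show "time u < time w" "x \<in> nbrs E u \<Longrightarrow> time x < time w"
    using u' by auto
qed

lemma time_mono: "(u, v) \<in> F\<^sup>* \<Longrightarrow> time u \<le> time v"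
  by (induction rule: rtrancl_induct) (auto dest: force_time(1))

lemma reached_from_source: "v \<in> V \<Longrightarrow> \<exists>r\<in>B. (r, v) \<in> F\<^sup>*"
proof (induction "time v" arbitrary: v rule: less_induct)
  case less
  show ?case
  proof (cases "v \<in> B")
    case False
    then obtain u where u: "(u, v) \<in> F" "time u < time v"
      using forced_by less.prems by blast
    then have "u \<in> V"
      using forces_subset by auto
    then obtain r where "r \<in> B" "(r, u) \<in> F\<^sup>*"
      using less.hyps u(2) by blast
    then show ?thesis
      using u(1) by (meson rtrancl.rtrancl_into_rtrancl)
  qed blast
qed

lemma source_unique:
  assumes "r \<in> B" "r' \<in> B" "(r, v) \<in> F\<^sup>*" "(r', v) \<in> F\<^sup>*"
  shows "r = r'"
proof -
  have "(v, r) \<in> (F\<inverse>)\<^sup>*" "(v, r') \<in> (F\<inverse>)\<^sup>*"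
    using assms(3,4) by (simp_all add: rtrancl_converse)
  then have "(r, r') \<in> F\<^sup>* \<or> (r', r) \<in> F\<^sup>*"
    using single_valued_confluent[OF forced_once] by (simp add: rtrancl_converse)
  moreover have "r \<notin> Range F" "r' \<notin> Range F"
    using assms(1,2) sources_not_forced by blast+
  ultimately show ?thesis
    by (metis Range.intros rtranclE)
qed

definition root :: "'a \<Rightarrow> 'a" where
  "root v = (THE r. r \<in> B \<and> (r, v) \<in> F\<^sup>*)"

lemma root_eq: "r \<in> B \<Longrightarrow> (r, v) \<in> F\<^sup>* \<Longrightarrow> root v = r"
  unfolding root_def using source_unique by blast

lemma root:
  assumes "v \<in> V"
  shows "root v \<in> B \<and> (root v, v) \<in> F\<^sup>*"
proof -
  obtain r where "r \<in> B" "(r, v) \<in> F\<^sup>*"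
    using reached_from_source[OF assms] by blast
  then show ?thesis
    using root_eq by simp
qed

lemma same_root_comparable:
  "u \<in> V \<Longrightarrow> v \<in> V \<Longrightarrow> root u = root v \<Longrightarrow> (u, v) \<in> F\<^sup>* \<or> (v, u) \<in> F\<^sup>*"
  using root[of u] root[of v] single_valued_confluent[OF forces_once, of "root u" u v] by simp

text \<open>
  Vertex \<open>v\<close> will occupy columns \<open>time v + 1\<close> to \<open>retire v\<close>; a vertex that never forces keeps
  its row up to the last column \<open>p + 1\<close>.
\<close>

definition retire :: "'a \<Rightarrow> nat" where
  "retire v = (if v \<in> Domain F then time (THE w. (v, w) \<in> F) else p + 1)"

lemma retire_force:
  assumes "(v, w) \<in> F"
  shows "retire v = time w"
proof -
  have "(THE w'. (v, w') \<in> F) = w"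
  proof (rule the_equality)
    show "w' = w" if "(v, w') \<in> F" for w'
      using single_valuedD[OF forces_once assms that] by simp
  qed (rule assms)
  then show ?thesis
    using assms unfolding retire_def by (metis Domain.DomainI)
qed

lemma retire_le: "retire v \<le> p + 1"
proof (cases "v \<in> Domain F")
  case True
  then obtain w where vw: "(v, w) \<in> F"
    by blast
  then have "w \<in> V"
    using forces_subset by auto
  then show ?thesis
    using retire_force[OF vw] time_le_p[of w] by simp
qed (simp add: retire_def)

lemma time_lt_retire: "v \<in> V \<Longrightarrow> time v < retire v"
proof (cases "v \<in> Domain F")
  case True
  then obtain w where "(v, w) \<in> F"
    by blast
  then show ?thesis
    using retire_force force_time(1) by simp
qed (simp add: retire_def time_le_p less_Suc_eq_le)

lemma neighbour_before_retire:
  assumes "(u, v) \<in> E"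
  shows "time v < retire u"
proof (cases "u \<in> Domain F")
  case True
  then obtain w where "(u, w) \<in> F"
    by blast
  then show ?thesis
    using retire_force force_time(2) assms by (simp add: nbrs_def)
next
  case False
  have "v \<in> V"
    using assms edges_subset by auto
  then show ?thesis
    using False time_le_p by (simp add: retire_def less_Suc_eq_le)
qed

lemma retire_le_time:
  assumes "(u, v) \<in> F\<^sup>+"
  shows "retire u \<le> time v"
proof -
  obtain w where "(u, w) \<in> F" "(w, v) \<in> F\<^sup>*"
    using tranclD[OF assms] by blast
  then show ?thesis
    using retire_force time_mono by simp
qed

lemma same_root_separated:
  assumes "u \<in> V" "v \<in> V" "root u = root v" "u \<noteq> v"
  shows "retire u \<le> time v \<or> retire v \<le> time u"
  using same_root_comparable[OF assms(1-3)] assms(4) retire_le_time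
  by (auto simp: rtrancl_eq_or_trancl)

lemma row_cover:
  assumes "r \<in> B" "c \<in> {1..p + 1}"
  shows "\<exists>v\<in>V. (r, v) \<in> F\<^sup>* \<and> Suc (time v) \<le> c \<and> c \<le> retire v"
proof -
  let ?P = "\<lambda>v. v \<in> V \<and> (r, v) \<in> F\<^sup>* \<and> time v < c"
  have "?P r"
    using assms sources_subset time_source by auto
  then obtain v where v: "v \<in> V" "(r, v) \<in> F\<^sup>*" "time v < c"
    and greatest: "\<And>u. ?P u \<Longrightarrow> time u \<le> time v"
    using ex_has_greatest_nat[of ?P r time c] by blast
  have "c \<le> retire v"
  proof (cases "v \<in> Domain F")
    case True
    then obtain w where w: "(v, w) \<in> F"
      by blast
    then have "w \<in> V" "(r, w) \<in> F\<^sup>*"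
      using forces_subset v(2) by auto
    then have "\<not> time w < c"
      using greatest[of w] force_time(1)[OF w] by auto
    then show ?thesis
      using retire_force[OF w] by simp
  next
    case False
    then show ?thesis
      using assms(2) by (simp add: retire_def)
  qed
  then show ?thesis
    using v by (auto simp: Suc_le_eq)
qed

lemma same_root_disjoint:
  assumes "u \<in> V" "v \<in> V" "root u = root v"
    and "Suc (time u) \<le> c" "c \<le> retire u" "Suc (time v) \<le> c" "c \<le> retire v"
  shows "u = v"
proof (rule ccontr)
  assume "u \<noteq> v"
  then have "retire u \<le> time v \<or> retire v \<le> time u"
    using same_root_separated assms(1-3) by blast
  then show False
    using assms(4-7) by linarith
qed

lemma adjacent_roots_differ:
  assumes "(u, v) \<in> E"
  shows "root u \<noteq> root v"
proof
  assume "root u = root v"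
  have "(v, u) \<in> E" "u \<in> V" "v \<in> V" "u \<noteq> v"
    using assms sym_edges edges_subset no_loops unfolding sym_def by auto
  then have "retire u \<le> time v \<or> retire v \<le> time u"
    using same_root_separated \<open>root u = root v\<close> by blast
  moreover have "time v < retire u" "time u < retire v"
    using neighbour_before_retire assms \<open>(v, u) \<in> E\<close> by blast+
  ultimately show False
    by linarith
qed

lemma interval_layout_from_times:
  obtains row where "interval_layout V E (card B) p row (\<lambda>v. Suc (time v)) retire"
proof -
  obtain h where h: "bij_betw h B {1..card B}"
    using finite_same_card_bij[of B "{1..card B}"] finite_vertices sources_subset finite_subset by auto
  have row_eq: "h (root u) = h (root v) \<longleftrightarrow> root u = root v" if "u \<in> V" "v \<in> V" for u v
    using root[OF that(1)] root[OF that(2)] h unfolding bij_betw_def by (auto simp: inj_on_eq_iff)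
  have "interval_layout V E (card B) p (h \<circ> root) (\<lambda>v. Suc (time v)) retire"
  proof (unfold_locales)
    show "(h \<circ> root) v \<in> {1..card B}" if "v \<in> V" for v
      using root[OF that] bij_betwE[OF h] by auto
    show "1 \<le> Suc (time v) \<and> Suc (time v) \<le> retire v \<and> retire v \<le> p + 1" if "v \<in> V" for v
      using time_lt_retire[OF that] retire_le by simp
  next
    fix i c assume "i \<in> {1..card B}" "c \<in> {1..p + 1}"
    obtain r where r: "r \<in> B" "h r = i"
      using bij_betw_imp_surj_on[OF h] \<open>i \<in> {1..card B}\<close> by (metis imageE)
    then obtain v where "v \<in> V" "(r, v) \<in> F\<^sup>*" "Suc (time v) \<le> c" "c \<le> retire v"
      using row_cover \<open>c \<in> {1..p + 1}\<close> by blast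
    then show "\<exists>v\<in>V. (h \<circ> root) v = i \<and> Suc (time v) \<le> c \<and> c \<le> retire v"
      using root_eq r by auto
  next
    fix u v c assume "u \<in> V" "v \<in> V" "(h \<circ> root) u = (h \<circ> root) v"
      "Suc (time u) \<le> c" "c \<le> retire u" "Suc (time v) \<le> c" "c \<le> retire v"
    then show "u = v"
      using same_root_disjoint row_eq by simp
  next
    fix u v assume uv: "(u, v) \<in> E"
    then have "u \<in> V" "v \<in> V" "(v, u) \<in> E"
      using edges_subset sym_edges unfolding sym_def by auto
    then show "(h \<circ> root) u \<noteq> (h \<circ> root) v \<and> Suc (time v) \<le> retire u \<and> Suc (time u) \<le> retire v"
      using row_eq adjacent_roots_differ[OF uv] neighbour_before_retire uv by (simp add: Suc_le_eq)
  qed (rule graph)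
  then show thesis
    by (rule that)
qed

lemma card_sources_pos:
  assumes "V \<noteq> {}"
  shows "1 \<le> card B"
proof -
  have "B \<noteq> {}"
  proof
    assume "B = {}"
    then have "hop_upto V E B F n = {}" for n
      by (induction n) auto
    then show False
      using all_blue assms by simp
  qed
  then show ?thesis
    using finite_vertices sources_subset finite_subset by (simp add: Suc_le_eq card_gt_0_iff)
qed

end

theorem theorem3p14:
  fixes V :: "'a set" and E :: "('a \<times> 'a) set" and t :: nat
  assumes "simple_graph V E" and "V \<noteq> {}" and "t > 0"
  shows "th_H V E \<le> enat t \<longleftrightarrow>
         (\<exists>a b. a \<ge> 1 \<and> a + b = t \<and>
            (\<exists>VS ES. grid_reach a b VS ES \<and> graph_iso V E VS ES))"
proof
  assume "th_H V E \<le> enat t"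
  then obtain B F where process: "forcing_process V E B F (t - card B)" and "card B \<le> t"
    using th_H_le_imp_forcing_process[OF assms(1)] by blast
  interpret forcing_process V E B F "t - card B"
    by (rule process)
  obtain row where "interval_layout V E (card B) (t - card B) row (\<lambda>v. Suc (time v)) retire"
    by (rule interval_layout_from_times)
  then interpret layout: interval_layout V E "card B" "t - card B" row "\<lambda>v. Suc (time v)" retire .
  show "\<exists>a b. a \<ge> 1 \<and> a + b = t \<and> (\<exists>VS ES. grid_reach a b VS ES \<and> graph_iso V E VS ES)"
    using card_sources_pos[OF assms(2)] \<open>card B \<le> t\<close> layout.grid_reach_cells layout.graph_iso_cells
    by (intro exI[of _ "card B"] exI[of _ "t - card B"]) auto
next
  assume "\<exists>a b. a \<ge> 1 \<and> a + b = t \<and> (\<exists>VS ES. grid_reach a b VS ES \<and> graph_iso V E VS ES)"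
  then obtain a b VS ES where "a + b = t" "grid_reach a b VS ES" "graph_iso V E VS ES"
    by blast
  moreover obtain row start stop where "interval_layout V E a b row start stop"
    using grid_reach_imp_interval_layout[OF assms(1) calculation(2,3)] .
  ultimately show "th_H V E \<le> enat t"
    using interval_layout.th_H_le by blast
qed

end
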